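(* Let $m\ge2$, let $S\le H\le G$, and let $W$ be a cyclic $R_mH$-module which (with $S$ acting trivially) is a free $R_m(H/S)$-module. Then $W$ does not have property $\mathcal P(H)$.
   Context: $p$ is a prime, $G$ a cyclic group of order $p^n$, $R_m=\mathbb Z/p^m\mathbb Z$. Let $H\le G$ with generator $\tau$. For $m\ge2$, an $R_mH$-module $W$ has property $\mathcal P(H)$ if there exist an integer $s\ge0$ and elements $y,z\in W\setminus\big((\tau^{p^s}-1)W+pW\big)$ such that $(\tau^{p^s}-1)y=p^{m-1}z$. *)

theory Defs
  imports "HOL-Computational_Algebra.Primes"
begin

definition zmult :: "int \<Rightarrow> 'w::ab_group_add \<Rightarrow> 'w" where
  "zmult k x = (if 0 \<le> k then (((+) x) ^^ nat k) 0 else - ((((+) x) ^^ nat (- k)) 0))"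

text \<open>The group H is cyclic of order p^k with generator tau; an R_m H-module
  structure on the abelian group 'w is given by the action T of tau:
  an additive map with T^(p^k) = id, on a group killed by p^m.\<close>
definition RmH_module :: "nat \<Rightarrow> nat \<Rightarrow> nat \<Rightarrow> ('w::ab_group_add \<Rightarrow> 'w) \<Rightarrow> bool" where
  "RmH_module p m k T \<longleftrightarrow>
     (\<forall>x y. T (x + y) = T x + T y) \<and>
     (\<forall>x::'w. zmult (int p ^ m) x = 0) \<and>
     (T ^^ (p ^ k)) = id"

definition cyclic_RmH_module :: "nat \<Rightarrow> ('w::ab_group_add \<Rightarrow> 'w) \<Rightarrow> bool" where
  "cyclic_RmH_module hk T \<longleftrightarrow>
     (\<exists>w0. \<forall>w. \<exists>c :: nat \<Rightarrow> int. w = (\<Sum>i<hk. zmult (c i) ((T ^^ i) w0)))"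

text \<open>W is a free R_m[C_d]-module, where C_d (the quotient H/S, order d) acts via T:
  there is a basis B such that every element has a unique expression
  sum_{b in B, i<d} c(b,i) T^i b with coefficients c(b,i) in R_m = {0..<p^m},
  finitely many nonzero.\<close>
definition free_Rm_grmod :: "nat \<Rightarrow> nat \<Rightarrow> nat \<Rightarrow> ('w::ab_group_add \<Rightarrow> 'w) \<Rightarrow> bool" where
  "free_Rm_grmod p m d T \<longleftrightarrow>
     (\<exists>B :: 'w set. \<forall>w. \<exists>!c :: 'w \<times> nat \<Rightarrow> int.
        (\<forall>x. 0 \<le> c x \<and> c x < int p ^ m) \<and>
        (\<forall>b i. c (b, i) \<noteq> 0 \<longrightarrow> b \<in> B \<and> i < d) \<and>
        finite {x. c x \<noteq> 0} \<and>
        w = (\<Sum>x\<in>{x. c x \<noteq> 0}. zmult (c x) ((T ^^ snd x) (fst x))))"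

text \<open>Property P(H): exists s and y, z outside (tau^(p^s) - 1)W + pW with
  (tau^(p^s) - 1) y = p^(m-1) z.\<close>
definition sub_tau_p :: "nat \<Rightarrow> nat \<Rightarrow> ('w::ab_group_add \<Rightarrow> 'w) \<Rightarrow> 'w set" where
  "sub_tau_p p s T = {(T ^^ (p ^ s)) u - u + zmult (int p) v | u v. True}"

definition property_P :: "nat \<Rightarrow> nat \<Rightarrow> ('w::ab_group_add \<Rightarrow> 'w) \<Rightarrow> bool" where
  "property_P p m T \<longleftrightarrow>
     (\<exists>s::nat. \<exists>y z. y \<notin> sub_tau_p p s T \<and> z \<notin> sub_tau_p p s T \<and>
        (T ^^ (p ^ s)) y - y = zmult (int p ^ (m - 1)) z)"

end

theory Submission
  imports Defs
begin

text \<open>Let \<open>d = p^(k-j)\<close>, so that \<open>\<tau>^d = 1\<close> on \<open>W\<close>, and \<open>g = p^min(s, k-j)\<close>, so that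
  \<open>\<tau>^(p^s) = \<tau>^g\<close> and \<open>d = g e\<close>. If \<open>(\<tau>^g - 1) y = p^(m-1) z\<close>, applying the norm
  \<open>N = \<Sum>\<^sub>l\<^sub><\<^sub>e \<tau>^(g l)\<close>, which kills \<open>\<tau>^g - 1\<close>, gives \<open>p^(m-1) N z = 0\<close>. By freeness this makes
  every coordinate of \<open>N z\<close>, i.e. every class sum \<open>\<Sum>\<^sub>l c(b, r + g l)\<close> of the coordinates
  \<open>c\<close> of \<open>z\<close>, divisible by \<open>p\<close>. Modulo these class sums each coordinate sequence is
  \<open>\<tau>^g - 1\<close> applied to its partial class sums, so \<open>z \<in> (\<tau>^(p^s) - 1) W + p W\<close>.\<close>

lemma zmult_0 [simp]: "zmult 0 x = 0"
  by (simp add: zmult_def)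

lemma zmult_succ: "zmult (k + 1) x = zmult k x + x"
proof (cases "0 \<le> k")
  case True
  then have "nat (k + 1) = Suc (nat k)" by simp
  with True show ?thesis by (simp add: zmult_def add.commute)
next
  case False
  show ?thesis
  proof (cases "k = -1")
    case True then show ?thesis by (simp add: zmult_def)
  next
    case k_ne: False
    with False have "nat (- k) = Suc (nat (- (k + 1)))" by simp
    with False k_ne show ?thesis by (simp add: zmult_def algebra_simps)
  qed
qed

lemma zmult_pred: "zmult (k - 1) x = zmult k x - x"
  using zmult_succ[of "k - 1" x] by simp

lemma zmult_1 [simp]: "zmult 1 x = x"
  using zmult_succ[of 0 x] by simp

lemma zmult_add_left: "zmult (a + b) x = zmult a x + zmult b x"
proof (induction b rule: int_induct[where k = 0])
  case base then show ?case by simp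
next
  case (step1 i)
  then show ?case using zmult_succ[of "a + i" x] zmult_succ[of i x] by (simp add: algebra_simps)
next
  case (step2 i)
  then show ?case by (simp only: add_diff_eq zmult_pred)
qed

lemma zmult_zero_right [simp]: "zmult a (0::'w::ab_group_add) = 0"
  by (induction a rule: int_induct[where k = 0]) (simp_all add: zmult_succ zmult_pred)

lemma zmult_add_right: "zmult a (x + y) = zmult a x + zmult a y"
  by (induction a rule: int_induct[where k = 0]) (simp_all add: zmult_succ zmult_pred algebra_simps)

lemma zmult_neg_left: "zmult (- a) x = - zmult a x"
  using zmult_add_left[of a "- a" x] by (simp add: eq_neg_iff_add_eq_0 add.commute)

lemma zmult_diff_left: "zmult (a - b) x = zmult a x - zmult b x"
  using zmult_add_left[of a "- b" x] zmult_neg_left[of b x] by simp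

lemma zmult_mult: "zmult (a * b) x = zmult a (zmult b x)"
  by (induction a rule: int_induct[where k = 0])
    (simp_all add: distrib_right left_diff_distrib zmult_add_left zmult_diff_left zmult_succ zmult_pred)

lemma zmult_sum_right: "zmult a (sum f A) = (\<Sum>x\<in>A. zmult a (f x))"
  by (induction A rule: infinite_finite_induct) (simp_all add: zmult_add_right)

lemma zmult_mod:
  assumes "zmult M x = 0"
  shows "zmult (a mod M) x = zmult a x"
proof -
  have "zmult a x = zmult (a div M * M) x + zmult (a mod M) x"
    unfolding zmult_add_left[symmetric] by simp
  also have "zmult (a div M * M) x = 0" by (simp add: zmult_mult assms)
  finally show ?thesis by simp
qed

lemma additive_zero:
  fixes h :: "'a::ab_group_add \<Rightarrow> 'b::ab_group_add"
  assumes "\<And>x y. h (x + y) = h x + h y"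
  shows "h 0 = 0"
  using assms[of 0 0] by simp

lemma additive_diff:
  fixes h :: "'a::ab_group_add \<Rightarrow> 'b::ab_group_add"
  assumes "\<And>x y. h (x + y) = h x + h y"
  shows "h (x - y) = h x - h y"
  using assms[of "x - y" y] by (simp add: eq_diff_eq)

lemma additive_zmult:
  fixes h :: "'a::ab_group_add \<Rightarrow> 'b::ab_group_add"
  assumes "\<And>x y. h (x + y) = h x + h y"
  shows "h (zmult a x) = zmult a (h x)"
  by (induction a rule: int_induct[where k = 0])
    (simp_all add: additive_zero[of h, OF assms] additive_diff[of h, OF assms] assms zmult_succ zmult_pred)

lemma additive_sum:
  fixes h :: "'a::ab_group_add \<Rightarrow> 'b::ab_group_add"
  assumes "\<And>x y. h (x + y) = h x + h y"
  shows "h (sum f A) = (\<Sum>x\<in>A. h (f x))"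
  by (induction A rule: infinite_finite_induct) (simp_all add: additive_zero[of h, OF assms] assms)

lemma mod_add_shift_back:
  fixes a d x :: nat
  assumes "x < d" "a \<le> d"
  shows "((a + x) mod d + d - a) mod d = x"
proof -
  have "((a + x) mod d + d - a) mod d = ((a + x) mod d + (d - a)) mod d"
    by (simp only: Nat.add_diff_assoc[OF assms(2)])
  also have "\<dots> = (a + x + (d - a)) mod d" by (simp add: mod_add_left_eq)
  also have "a + x + (d - a) = x + d" using assms by simp
  finally show ?thesis using assms by simp
qed

lemma mod_add_shift_forth:
  fixes a d x :: nat
  assumes "x < d" "a \<le> d"
  shows "(a + (x + d - a) mod d) mod d = x"
proof -
  have "(a + (x + d - a) mod d) mod d = (a + (x + (d - a)) mod d) mod d"
    by (simp only: Nat.add_diff_assoc[OF assms(2)])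
  also have "\<dots> = (a + (x + (d - a))) mod d" by (simp add: mod_add_right_eq)
  also have "a + (x + (d - a)) = x + d" using assms by simp
  finally show ?thesis using assms by simp
qed

lemma sum_coset_reflect:
  fixes c :: "nat \<Rightarrow> int"
  assumes "r < g" "0 < e" "d = g * e"
  shows "(\<Sum>l<e. c (r + g * l)) = (\<Sum>l<e. c ((r + (d - g * l)) mod d))"
proof -
  have reflect_involutive: "(e - (e - l) mod e) mod e = l" if "l < e" for l
    using that by (cases "l = 0") auto
  show ?thesis
  proof (rule sum.reindex_bij_witness[where i = "\<lambda>l. (e - l) mod e" and j = "\<lambda>l. (e - l) mod e"])
    fix l assume l: "l \<in> {..<e}"
    show "c ((r + (d - g * ((e - l) mod e))) mod d) = c (r + g * l)"
    proof (cases "l = 0")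
      case True
      have "(r + d) mod d = r" using assms by (simp add: less_le_trans)
      with True show ?thesis by simp
    next
      case False
      then have "(e - l) mod e = e - l" using l by simp
      moreover have "d - g * (e - l) = g * l" using assms l by (simp add: diff_mult_distrib2)
      moreover have "r + g * l < d"
      proof -
        have "r + g * l < g * Suc l" using assms by simp
        also have "\<dots> \<le> g * e" using l by (intro mult_le_mono2) simp
        finally show ?thesis using assms by simp
      qed
      ultimately show ?thesis by simp
    qed
  qed (simp_all add: reflect_involutive assms(2))
qed

text \<open>The negated partial sums \<open>u\<close> along the residue classes modulo \<open>g\<close> satisfy
  \<open>u(i - g) - u(i) = c(i)\<close> (indices mod \<open>d\<close>) except at the wrap-around \<open>i < g\<close>, where the
  full class sum appears: this solves \<open>c = (\<tau>^g - 1) u\<close> modulo the class sums.\<close>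
lemma coset_partial_sum_shift:
  fixes c :: "nat \<Rightarrow> int"
  assumes g: "0 < g" and e: "0 < e" and d: "d = g * e" and i: "i < d"
  defines "u \<equiv> \<lambda>i. - (\<Sum>a<Suc (i div g). c (i mod g + g * a))"
  shows "u ((i + (d - g)) mod d) - u i = c i - (if i < g then (\<Sum>l<e. c (i + g * l)) else 0)"
proof (cases "i < g")
  case False
  then have "(i + (d - g)) mod d = i - g"
    using d e i by (simp add: mod_if)
  moreover have "(i - g) div g = i div g - 1" "(i - g) mod g = i mod g" "1 \<le> i div g"
    using False g by (simp_all add: le_div_geq le_mod_geq)
  moreover have "i mod g + g * (i div g) = i" by simp
  ultimately show ?thesis using False unfolding u_def by simp
next
  case True
  have class_sum: "(\<Sum>l<e. c (i + g * l)) = (\<Sum>a<Suc (e - 1). c (i mod g + g * a))"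
    using True e by simp
  show ?thesis
  proof (cases "e = 1")
    case True
    then show ?thesis using \<open>i < g\<close> d unfolding u_def by simp
  next
    case False
    then have "(i + (d - g)) mod d = i + g * (e - 1)"
      using d e \<open>i < g\<close> i by (simp add: diff_mult_distrib2 algebra_simps)
    moreover have "(i + g * (e - 1)) div g = e - 1" "(i + g * (e - 1)) mod g = i"
      using \<open>i < g\<close> g by simp_all
    ultimately show ?thesis using \<open>i < g\<close> class_sum unfolding u_def by simp
  qed
qed

locale periodic_additive =
  fixes T :: "'w::ab_group_add \<Rightarrow> 'w" and d :: nat
  assumes T_add: "\<And>x y. T (x + y) = T x + T y"
    and funpow_T_period: "T ^^ d = id"
    and period_pos: "0 < d"
begin

lemma funpow_T_add: "(T ^^ n) (x + y) = (T ^^ n) x + (T ^^ n) y"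
  by (induction n) (simp_all add: T_add)

lemma funpow_T_mod: "T ^^ n = T ^^ (n mod d)"
proof
  fix x
  show "(T ^^ n) x = (T ^^ (n mod d)) x"
    using funpow_mod_eq[where f = T and n = d and m = n and x = x] by (simp add: funpow_T_period)
qed

definition orbit_comb :: "'w set \<Rightarrow> ('w \<times> nat \<Rightarrow> int) \<Rightarrow> 'w" where
  "orbit_comb B0 f = (\<Sum>b\<in>B0. \<Sum>i<d. zmult (f (b, i)) ((T ^^ i) b))"

lemma orbit_comb_cong:
  "(\<And>b i. b \<in> B0 \<Longrightarrow> i < d \<Longrightarrow> f (b, i) = g (b, i)) \<Longrightarrow> orbit_comb B0 f = orbit_comb B0 g"
  unfolding orbit_comb_def by (intro sum.cong) auto

lemma orbit_comb_add: "orbit_comb B0 (\<lambda>x. f x + g x) = orbit_comb B0 f + orbit_comb B0 g"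
  unfolding orbit_comb_def by (simp add: zmult_add_left sum.distrib)

lemma orbit_comb_diff: "orbit_comb B0 (\<lambda>x. f x - g x) = orbit_comb B0 f - orbit_comb B0 g"
  unfolding orbit_comb_def by (simp add: zmult_diff_left sum_subtractf)

lemma orbit_comb_smult: "orbit_comb B0 (\<lambda>x. a * f x) = zmult a (orbit_comb B0 f)"
  unfolding orbit_comb_def by (simp add: zmult_mult zmult_sum_right)

lemma orbit_comb_zero: "orbit_comb B0 (\<lambda>x. 0) = 0"
  by (simp add: orbit_comb_def)

lemma orbit_comb_sum: "orbit_comb B0 (\<lambda>x. \<Sum>l\<in>A. F l x) = (\<Sum>l\<in>A. orbit_comb B0 (F l))"
  by (induction A rule: infinite_finite_induct) (simp_all add: orbit_comb_zero orbit_comb_add)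

lemma funpow_T_orbit_comb:
  assumes "a \<le> d"
  shows "(T ^^ a) (orbit_comb B0 f) = orbit_comb B0 (\<lambda>(b, i). f (b, (i + (d - a)) mod d))"
proof -
  have shift: "(T ^^ a) ((T ^^ i) b) = (T ^^ ((a + i) mod d)) b" for i b
    by (metis funpow_add funpow_T_mod comp_apply)
  have "(T ^^ a) (orbit_comb B0 f) = (\<Sum>b\<in>B0. \<Sum>i<d. zmult (f (b, i)) ((T ^^ ((a + i) mod d)) b))"
    unfolding orbit_comb_def additive_sum[of "T ^^ a", OF funpow_T_add]
      additive_zmult[of "T ^^ a", OF funpow_T_add] by (simp only: shift)
  also have "\<dots> = orbit_comb B0 (\<lambda>(b, i). f (b, (i + (d - a)) mod d))"
    unfolding orbit_comb_def
  proof (rule sum.cong[OF refl])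
    fix b
    show "(\<Sum>i<d. zmult (f (b, i)) ((T ^^ ((a + i) mod d)) b)) =
          (\<Sum>i<d. zmult ((\<lambda>(b, i). f (b, (i + (d - a)) mod d)) (b, i)) ((T ^^ i) b))"
      by (rule sum.reindex_bij_witness[where j = "\<lambda>i. (a + i) mod d" and i = "\<lambda>j. (j + (d - a)) mod d"])
        (use assms period_pos in \<open>auto simp: mod_add_shift_back mod_add_shift_forth\<close>)
  qed
  finally show ?thesis .
qed

lemma norm_funpow_T_diff_eq_0:
  assumes "d = g * e"
  shows "(\<Sum>l<e. (T ^^ (g * l)) ((T ^^ g) y - y)) = 0"
proof -
  have "(T ^^ (g * l)) ((T ^^ g) y) = (T ^^ (g * Suc l)) y" for l
    by (metis funpow_add comp_apply mult_Suc_right add.commute)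
  then have "(\<Sum>l<e. (T ^^ (g * l)) ((T ^^ g) y - y)) = (\<Sum>l<e. (T ^^ (g * Suc l)) y - (T ^^ (g * l)) y)"
    by (simp add: additive_diff[of "T ^^ _", OF funpow_T_add])
  also have "\<dots> = (T ^^ (g * e)) y - y"
    by (subst sum_lessThan_telescope[of "\<lambda>l. (T ^^ (g * l)) y"]) simp
  finally show ?thesis using assms funpow_T_period by simp
qed

lemma funpow_T_prime_power:
  assumes "d = p ^ q"
  shows "T ^^ (p ^ s) = T ^^ (p ^ min s q)"
  using funpow_T_mod[of "p ^ s"] funpow_T_mod[of "p ^ q"] assms
  by (cases "s < q") (auto simp: le_imp_power_dvd)

lemma norm_orbit_comb:
  assumes "d = g * e"
  shows "(\<Sum>l<e. (T ^^ (g * l)) (orbit_comb B0 c))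
    = orbit_comb B0 (\<lambda>(b, i). \<Sum>l<e. c (b, (i + (d - g * l)) mod d))"
proof -
  have "(\<Sum>l<e. (T ^^ (g * l)) (orbit_comb B0 c))
      = (\<Sum>l<e. orbit_comb B0 (\<lambda>(b, i). c (b, (i + (d - g * l)) mod d)))"
    using assms by (intro sum.cong refl funpow_T_orbit_comb) simp
  also have "\<dots> = orbit_comb B0 (\<lambda>(b, i). \<Sum>l<e. c (b, (i + (d - g * l)) mod d))"
    by (subst orbit_comb_sum[symmetric]) (simp only: split_def)
  finally show ?thesis .
qed

lemma orbit_comb_in_augmentation:
  assumes d: "d = g * e" and g: "0 < g"
    and class_sums_dvd: "\<And>b r. b \<in> B0 \<Longrightarrow> r < g \<Longrightarrow> int p dvd (\<Sum>l<e. c (b, r + g * l))"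
  shows "\<exists>u v. orbit_comb B0 c = (T ^^ g) u - u + zmult (int p) v"
proof -
  have e: "0 < e" and g_le_d: "g \<le> d"
    using d period_pos by (auto intro: mult_le_mono2 simp: Suc_le_eq)
  define u where "u = (\<lambda>(b, i). - (\<Sum>a<Suc (i div g). c (b, i mod g + g * a)))"
  define v where "v = (\<lambda>(b, i). if i < g then (\<Sum>l<e. c (b, i + g * l)) div int p else 0)"
  have "(T ^^ g) (orbit_comb B0 u) - orbit_comb B0 u + zmult (int p) (orbit_comb B0 v)
      = orbit_comb B0 (\<lambda>x. ((\<lambda>(b, i). u (b, (i + (d - g)) mod d)) x - u x) + int p * v x)"
    unfolding orbit_comb_add orbit_comb_diff orbit_comb_smult funpow_T_orbit_comb[OF g_le_d] ..
  also have "\<dots> = orbit_comb B0 c"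
  proof (rule orbit_comb_cong)
    fix b i assume b: "b \<in> B0" and i: "i < d"
    have "u (b, (i + (d - g)) mod d) - u (b, i)
        = c (b, i) - (if i < g then (\<Sum>l<e. c (b, i + g * l)) else 0)"
      using coset_partial_sum_shift[of g e d i "\<lambda>i. c (b, i)", OF g e d i] unfolding u_def by simp
    moreover have "int p * v (b, i) = (if i < g then (\<Sum>l<e. c (b, i + g * l)) else 0)"
      using class_sums_dvd[OF b] unfolding v_def by auto
    ultimately show "((\<lambda>(b, i). u (b, (i + (d - g)) mod d)) (b, i) - u (b, i)) + int p * v (b, i) = c (b, i)"
      by simp
  qed
  finally show ?thesis by metis
qed

lemma sum_support_eq_orbit_comb:
  assumes "finite B0" "{x. c x \<noteq> 0} \<subseteq> B0 \<times> {..<d}"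
  shows "(\<Sum>x\<in>{x. c x \<noteq> 0}. zmult (c x) ((T ^^ snd x) (fst x))) = orbit_comb B0 c"
proof -
  have "(\<Sum>x\<in>{x. c x \<noteq> 0}. zmult (c x) ((T ^^ snd x) (fst x)))
      = (\<Sum>x\<in>B0 \<times> {..<d}. zmult (c x) ((T ^^ snd x) (fst x)))"
    using assms by (intro sum.mono_neutral_left) auto
  then show ?thesis
    unfolding orbit_comb_def by (simp add: sum.cartesian_product case_prod_beta)
qed

end

locale free_periodic_module = periodic_additive T d
  for T :: "'w::ab_group_add \<Rightarrow> 'w" and d :: nat +
  fixes M :: int and B :: "'w set"
  assumes M_pos: "0 < M"
    and M_kills: "\<And>x :: 'w. zmult M x = 0"
    and free: "\<forall>w. \<exists>!c :: 'w \<times> nat \<Rightarrow> int.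
      (\<forall>x. 0 \<le> c x \<and> c x < M) \<and>
      (\<forall>b i. c (b, i) \<noteq> 0 \<longrightarrow> b \<in> B \<and> i < d) \<and>
      finite {x. c x \<noteq> 0} \<and>
      w = (\<Sum>x\<in>{x. c x \<noteq> 0}. zmult (c x) ((T ^^ snd x) (fst x)))"
begin

lemma ex_orbit_comb:
  obtains B0 c where "finite B0" "B0 \<subseteq> B" "z = orbit_comb B0 c"
proof -
  obtain c where c_supp: "\<forall>b i. c (b, i) \<noteq> 0 \<longrightarrow> b \<in> B \<and> i < d"
    and c_fin: "finite {x. c x \<noteq> 0}"
    and z: "z = (\<Sum>x\<in>{x. c x \<noteq> 0}. zmult (c x) ((T ^^ snd x) (fst x)))"
    using ex1_implies_ex[OF free[rule_format, of z]] by blast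
  define B0 where "B0 = fst ` {x. c x \<noteq> 0}"
  have c_supp_B0: "{x. c x \<noteq> 0} \<subseteq> B0 \<times> {..<d}"
  proof
    fix x assume "x \<in> {x. c x \<noteq> 0}"
    then show "x \<in> B0 \<times> {..<d}"
      using c_supp unfolding B0_def by (cases x) force
  qed
  have B0: "finite B0" "B0 \<subseteq> B"
    using c_fin c_supp unfolding B0_def by auto
  show ?thesis
    by (rule that[OF B0]) (simp add: z sum_support_eq_orbit_comb[OF B0(1) c_supp_B0])
qed

lemma orbit_comb_eq_0_imp_dvd:
  assumes B0: "finite B0" "B0 \<subseteq> B" and f: "orbit_comb B0 f = 0"
    and b: "b \<in> B0" and i: "i < d"
  shows "M dvd f (b, i)"
proof -
  define h where "h x = (if fst x \<in> B0 \<and> snd x < d then f x mod M else 0)" for x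
  have h_supp: "{x. h x \<noteq> 0} \<subseteq> B0 \<times> {..<d}"
    unfolding h_def by (auto split: if_splits)
  have "orbit_comb B0 h = orbit_comb B0 f"
    unfolding orbit_comb_def by (intro sum.cong refl) (simp add: h_def zmult_mod M_kills)
  then have h_sum: "(\<Sum>x\<in>{x. h x \<noteq> 0}. zmult (h x) ((T ^^ snd x) (fst x))) = 0"
    using sum_support_eq_orbit_comb[OF B0(1) h_supp] f by simp
  define coords where "coords c w \<longleftrightarrow> (\<forall>x. 0 \<le> c x \<and> c x < M) \<and>
      (\<forall>b i. c (b, i) \<noteq> 0 \<longrightarrow> b \<in> B \<and> i < d) \<and> finite {x. c x \<noteq> 0} \<and>
      w = (\<Sum>x\<in>{x. c x \<noteq> 0}. zmult (c x) ((T ^^ snd x) (fst x)))"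
    for c :: "'w \<times> nat \<Rightarrow> int" and w
  have "coords h 0"
    unfolding coords_def using M_pos B0 h_supp h_sum finite_subset[OF h_supp]
    by (auto simp: h_def split: if_splits)
  moreover have "coords (\<lambda>x. 0) 0"
    unfolding coords_def using M_pos by simp
  moreover have "\<exists>!c. coords c 0"
    unfolding coords_def by (rule free[rule_format])
  ultimately have "h = (\<lambda>x. 0)" by blast
  then have "h (b, i) = 0" by simp
  then show ?thesis
    using b i by (simp add: h_def dvd_eq_mod_eq_0)
qed

lemma funpow_T_diff_eq_smult_imp_augmentation:
  assumes d: "d = g * e" and g: "0 < g" and M: "M = int p * K" and K: "K \<noteq> 0"
    and y: "(T ^^ g) y - y = zmult K z"
  shows "\<exists>u v. z = (T ^^ g) u - u + zmult (int p) v"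
proof -
  obtain B0 c where B0: "finite B0" "B0 \<subseteq> B" and z: "z = orbit_comb B0 c"
    by (rule ex_orbit_comb)
  define N where "N = (\<lambda>(b, i). \<Sum>l<e. c (b, (i + (d - g * l)) mod d))"
  have "zmult K (\<Sum>l<e. (T ^^ (g * l)) z) = (\<Sum>l<e. (T ^^ (g * l)) ((T ^^ g) y - y))"
    using y by (simp add: zmult_sum_right additive_zmult[of "T ^^ _", OF funpow_T_add])
  also have "\<dots> = 0" by (rule norm_funpow_T_diff_eq_0[OF d])
  finally have "orbit_comb B0 (\<lambda>x. K * N x) = 0"
    unfolding orbit_comb_smult z norm_orbit_comb[OF d] N_def .
  then have "int p * K dvd K * N (b, i)" if "b \<in> B0" "i < d" for b i
    using orbit_comb_eq_0_imp_dvd[OF B0 _ that] M by blast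
  then have N_dvd: "int p dvd N (b, i)" if "b \<in> B0" "i < d" for b i
    using that K by (simp add: mult.commute[of "int p"])
  have "int p dvd (\<Sum>l<e. c (b, r + g * l))" if "b \<in> B0" "r < g" for b r
  proof -
    have "0 < e" and "g \<le> d"
      using d period_pos by (auto intro: mult_le_mono2 simp: Suc_le_eq)
    then have "(\<Sum>l<e. c (b, r + g * l)) = N (b, r)"
      unfolding N_def using sum_coset_reflect[of r g e d "\<lambda>i. c (b, i)"] that d by simp
    then show ?thesis
      using N_dvd[of b r] that \<open>g \<le> d\<close> by simp
  qed
  then show ?thesis
    using orbit_comb_in_augmentation[OF d g] z by blast
qed

end

lemma free_periodic_module_of_free_Rm_grmod:
  assumes "RmH_module p m k T" "T ^^ d = id" "free_Rm_grmod p m d T" "0 < p" "0 < d"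
  shows "\<exists>B. free_periodic_module T d (int p ^ m) B"
  using assms
  unfolding RmH_module_def free_Rm_grmod_def free_periodic_module_def
    free_periodic_module_axioms_def periodic_additive_def
  by auto

theorem lemma4p2:
  fixes p n m k j :: nat and T :: "'w::ab_group_add \<Rightarrow> 'w"
  assumes "prime p"
    and "2 \<le> m"
    and "k \<le> n"
    and "j \<le> k"
    and "RmH_module p m k T"
    and "(T ^^ (p ^ (k - j))) = id"
    and "cyclic_RmH_module (p ^ k) T"
    and "free_Rm_grmod p m (p ^ (k - j)) T"
  shows "\<not> property_P p m T"
proof
  assume "property_P p m T"
  then obtain s y z where z_notin: "z \<notin> sub_tau_p p s T"
    and y: "(T ^^ (p ^ s)) y - y = zmult (int p ^ (m - 1)) z"
    unfolding property_P_def by blast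
  define d where "d = p ^ (k - j)"
  define g where "g = p ^ min s (k - j)"
  have p: "0 < p" using assms(1) prime_gt_0_nat by blast
  have g: "0 < g" and d: "d = g * (d div g)"
    using p unfolding g_def d_def by (simp_all add: le_imp_power_dvd)
  have p_M: "int p ^ m = int p * int p ^ (m - 1)"
    using assms(2) by (simp add: power_eq_if)
  have "0 < d" using p by (simp add: d_def)
  then obtain B where "free_periodic_module T d (int p ^ m) B"
    using free_periodic_module_of_free_Rm_grmod[OF assms(5) assms(6,8)[folded d_def] p] by blast
  then interpret free_periodic_module T d "int p ^ m" B .
  have T_ps: "T ^^ (p ^ s) = T ^^ g"
    unfolding g_def by (rule funpow_T_prime_power) (simp add: d_def)
  obtain u v where "z = (T ^^ g) u - u + zmult (int p) v"
    using funpow_T_diff_eq_smult_imp_augmentation[OF d g p_M _ y[unfolded T_ps]] p by auto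
  then have "z \<in> sub_tau_p p s T"
    unfolding sub_tau_p_def T_ps by blast
  with z_notin show False ..
qed

end
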